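(* Let $n>s+1$, let $(p_{ij})_{i\neq j}$ be a probability distribution on $\mathcal{P}_n$ with $p_{ij}=p_{ji}>0$ for all $i\neq j$, let $Y_0\in(\mathbb{R}^s)^n$ be arbitrary, and let $Y(t)$ be the solution of the gradient flow of relative entropy with $Y(0)=Y_0$. (i) If $\beta(x)=(1+x)^{-1}$, then there is a uniform constant $C$ such that $\operatorname{diam} Y(t)\le C\,t^{1/4}$ for all $t\ge 1$. (ii) If $\beta(x)=e^{-x}$, then there is a uniform constant $C$ such that $\operatorname{diam} Y(t)\le C$ for all $t\ge 0$.
   Context: Standing setup. Fix integers $s\ge 1$ and $n>s+1$. Let $\mathcal{P}_n=\{(i,j): i,j\in\{1,\dots,n\},\ i\neq j\}$. Let $(p_{ij})_{i\neq j}$ be a probability distribution on $\mathcal{P}_n$ (so $\sum_{i\neq j}p_{ij}=1$) with $p_{ij}=p_{ji}>0$ for all $i\neq j$. Let $\beta:[0,\infty)\to(0,\infty)$ be a smooth decreasing function with $\sup_{x\ge 0}|(\log\beta)'(x)|<\infty$. For points $Y=(y_1,\dots,y_n)$ with $y_i\in\mathbb{R}^s$ define $q_{ij}=\beta(|y_i-y_j|^2)/\sum_{k\neq \ell}\beta(|y_k-y_\ell|^2)$ for $i\neq j$, and the relative entropy $\mathcal{C}(Y)=\sum_{i\neq j}p_{ij}\log(p_{ij}/q_{ij})$. The gradient flow of $\mathcal{C}$ is the ODE system $$\frac{dy_i}{dt}=4\sum_{j\neq i}(p_{ij}-q_{ij})(y_i-y_j)(\log\beta)'(|y_i-y_j|^2),\qquad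 i=1,\dots,n,$$ which, for any initial data $Y_0=Y(0)\in(\mathbb{R}^s)^n$, has a solution $Y(t)=(y_1(t),\dots,y_n(t))$ for all $t\ge0$. $\operatorname{diam}Y=\max_{i,j}|y_i-y_j|$. A constant is "uniform" if it is independent of $t$ (it may depend on $n,s,Y_0,(p_{ij}),\beta$). *)

theory Defs
  imports "HOL-Analysis.Analysis"
begin

text \<open>Points are indexed by a finite type 'i (so n = CARD('i)), each point lies in
  real^'s (so s = CARD('s)). A configuration Y is an element of (real^'s)^'i.\<close>

definition qij :: "(real \<Rightarrow> real) \<Rightarrow> (real^'s)^'i::finite \<Rightarrow> 'i \<Rightarrow> 'i \<Rightarrow> real" where
  "qij \<beta> Y i j = \<beta> ((norm (Y $ i - Y $ j))\<^sup>2) /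
     (\<Sum>k\<in>UNIV. \<Sum>l\<in>UNIV - {k}. \<beta> ((norm (Y $ k - Y $ l))\<^sup>2))"

definition flow_field :: "(real \<Rightarrow> real) \<Rightarrow> ('i::finite \<Rightarrow> 'i \<Rightarrow> real)
     \<Rightarrow> (real^'s)^'i \<Rightarrow> (real^'s)^'i" where
  "flow_field \<beta> p Y = (\<chi> i. 4 *\<^sub>R (\<Sum>j\<in>UNIV - {i}.
      ((p i j - qij \<beta> Y i j) * deriv (\<lambda>x. ln (\<beta> x)) ((norm (Y $ i - Y $ j))\<^sup>2))
        *\<^sub>R (Y $ i - Y $ j)))"

definition is_flow :: "(real \<Rightarrow> real) \<Rightarrow> ('i::finite \<Rightarrow> 'i \<Rightarrow> real)
     \<Rightarrow> (real \<Rightarrow> (real^'s)^'i) \<Rightarrow> bool" where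
  "is_flow \<beta> p Y \<longleftrightarrow> (\<forall>t\<ge>0. (Y has_vector_derivative flow_field \<beta> p (Y t)) (at t within {0..}))"

definition config_diam :: "(real^'s)^'i::finite \<Rightarrow> real" where
  "config_diam Y = Max {dist (Y $ i) (Y $ j) | i j. True}"

definition admissible_p :: "('i::finite \<Rightarrow> 'i \<Rightarrow> real) \<Rightarrow> bool" where
  "admissible_p p \<longleftrightarrow> (\<forall>i j. i \<noteq> j \<longrightarrow> p i j = p j i \<and> p i j > 0)
     \<and> (\<Sum>i\<in>UNIV. \<Sum>j\<in>UNIV - {i}. p i j) = 1"

end

theory Submission
  imports Defs
begin

(* The relative entropy decreases along its gradient flow, so it stays below its initial value K.
   As the kernel is decreasing, the entropy dominates p_min (log beta m - log beta D), where m and D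
   are the smallest and largest squared distances between the points.

   For beta x = exp (-x) this bounds D - m by K / p_min.  Since n >= s + 2 points of R^s are affinely
   dependent, they cannot be almost equidistant: D <= n (D - m).  Hence D stays bounded.

   For beta x = 1 / (1 + x) one only gets (1 + D) / (1 + m) <= exp (K / p_min).  The sum I of all
   squared distances has derivative 8n sum_ij (q_ij - p_ij) d_ij / (1 + d_ij) <= 8n / (1 + m),
   hence I' <= 8n exp (K / p_min) / (1 + D).  Together with I <= n^2 D this bounds (I^2)', so
   D^2 <= I^2 grows at most linearly in t. *)

lemma le_linear_growth_if_deriv_le:
  fixes f f' :: "real \<Rightarrow> real"
  assumes deriv: "\<And>t. t \<ge> 0 \<Longrightarrow> (f has_real_derivative f' t) (at t within {0..})"
    and bound: "\<And>t. t \<ge> 0 \<Longrightarrow> f' t \<le> C" and "t \<ge> 0"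
  shows "f t \<le> f 0 + C * t"
proof -
  have "\<exists>x\<in>{0..t}. f t - f 0 = (\<lambda>h. f' x * h) (t - 0)"
  proof (rule mvt_very_simple[OF \<open>t \<ge> 0\<close>])
    fix x assume "0 \<le> x" "x \<le> t"
    then have "(f has_real_derivative f' x) (at x within {0..t})"
      using has_field_derivative_subset[OF deriv[of x]] by auto
    then show "(f has_derivative (\<lambda>h. f' x * h)) (at x within {0..t})"
      by (simp add: has_field_derivative_def)
  qed
  then obtain x where "x \<in> {0..t}" "f t - f 0 = f' x * t" by auto
  moreover have "f' x * t \<le> C * t"
    using bound[of x] \<open>x \<in> {0..t}\<close> \<open>t \<ge> 0\<close> by (auto intro: mult_right_mono)
  ultimately show ?thesis by linarith
qed

lemma power4_le_imp_le_powr: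
  fixes x A t :: real
  assumes "x \<ge> 0" "A \<ge> 0" "t \<ge> 0" "x ^ 4 \<le> A * t"
  shows "x \<le> A powr (1/4) * t powr (1/4)"
proof -
  have "x ^ 4 = x powr 4"
    using powr_realpow'[OF \<open>x \<ge> 0\<close>, of 4] by simp
  moreover have "x = (x powr 4) powr (1/4)"
    using \<open>x \<ge> 0\<close> by (subst powr_powr) simp
  ultimately have "x = (x ^ 4) powr (1/4)" by simp
  also have "\<dots> \<le> (A * t) powr (1/4)"
    using assms by (intro powr_mono2) auto
  also have "\<dots> = A powr (1/4) * t powr (1/4)"
    by (rule powr_mult)
  finally show ?thesis .
qed

lemma has_real_derivative_power2_norm_diff:
  fixes x y :: "real \<Rightarrow> 'a::real_inner"
  assumes "(x has_vector_derivative x') (at t within S)" "(y has_vector_derivative y') (at t within S)"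
  shows "((\<lambda>t. (norm (x t - y t))\<^sup>2) has_real_derivative 2 * ((x t - y t) \<bullet> (x' - y'))) (at t within S)"
proof -
  have "((\<lambda>t. x t - y t) has_derivative (\<lambda>h. h *\<^sub>R (x' - y'))) (at t within S)"
    using has_vector_derivative_diff[OF assms] by (simp add: has_vector_derivative_def)
  from has_derivative_inner[OF this this] show ?thesis
    unfolding has_field_derivative_def power2_norm_eq_inner
    by (rule has_derivative_eq_rhs) (auto simp: inner_commute algebra_simps)
qed

lemma sum_offdiag_symmetric_inner_diff:
  fixes y z :: "'i::finite \<Rightarrow> 'a::real_inner" and u :: "'i \<Rightarrow> 'i \<Rightarrow> real"
  assumes sym: "\<And>i j. i \<noteq> j \<Longrightarrow> u i j = u j i"
  shows "(\<Sum>i\<in>UNIV. \<Sum>j\<in>UNIV-{i}. u i j * ((y i - y j) \<bullet> (z i - z j)))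
       = 2 * (\<Sum>i\<in>UNIV. z i \<bullet> (\<Sum>j\<in>UNIV-{i}. u i j *\<^sub>R (y i - y j)))"
proof -
  define a where "a i j = u i j * ((y i - y j) \<bullet> z i)" for i j
  have offdiag: "(\<Sum>j\<in>UNIV-{i}. f j) = (\<Sum>j\<in>UNIV. f j)" if "f i = 0"
    for i and f :: "'i \<Rightarrow> real"
    using that by (simp add: sum_diff1)
  have swap: "(\<Sum>i\<in>UNIV. \<Sum>j\<in>UNIV. u i j * ((y i - y j) \<bullet> z j)) = - (\<Sum>i\<in>UNIV. \<Sum>j\<in>UNIV. a i j)"
  proof -
    have "u i j * ((y i - y j) \<bullet> z j) = - a j i" for i j
      by (cases "i = j") (simp_all add: a_def sym inner_diff_left algebra_simps)
    then have "(\<Sum>i\<in>UNIV. \<Sum>j\<in>UNIV. u i j * ((y i - y j) \<bullet> z j)) = (\<Sum>j\<in>UNIV. \<Sum>i\<in>UNIV. - a j i)"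
      by (subst sum.swap) simp
    then show ?thesis by (simp add: sum_negf)
  qed
  have "(\<Sum>i\<in>UNIV. \<Sum>j\<in>UNIV-{i}. u i j * ((y i - y j) \<bullet> (z i - z j)))
      = (\<Sum>i\<in>UNIV. \<Sum>j\<in>UNIV. a i j - u i j * ((y i - y j) \<bullet> z j))"
    by (rule sum.cong[OF refl], subst offdiag) (simp_all add: a_def inner_diff_right right_diff_distrib)
  also have "\<dots> = 2 * (\<Sum>i\<in>UNIV. \<Sum>j\<in>UNIV. a i j)"
    by (simp add: sum_subtractf swap)
  also have "(\<Sum>i\<in>UNIV. \<Sum>j\<in>UNIV. a i j) = (\<Sum>i\<in>UNIV. z i \<bullet> (\<Sum>j\<in>UNIV-{i}. u i j *\<^sub>R (y i - y j)))"
    by (intro sum.cong refl)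
      (simp add: a_def offdiag inner_sum_right inner_commute)
  finally show ?thesis .
qed

lemma sum_sum_mean_power2:
  fixes U :: "'a \<Rightarrow> real"
  assumes "finite S"
  shows "(\<Sum>v\<in>S. \<Sum>w\<in>S. ((U v)\<^sup>2 + (U w)\<^sup>2) / 2) = real (card S) * (\<Sum>v\<in>S. (U v)\<^sup>2)"
proof -
  have "(\<Sum>v\<in>S. \<Sum>w\<in>S. ((U v)\<^sup>2 + (U w)\<^sup>2) / 2)
      = (\<Sum>v\<in>S. \<Sum>w\<in>S. (U v)\<^sup>2 / 2) + (\<Sum>v\<in>S. \<Sum>w\<in>S. (U w)\<^sup>2 / 2)"
    by (simp add: sum.distrib add_divide_distrib)
  also have "\<dots> = real (card S) * (\<Sum>v\<in>S. (U v)\<^sup>2)"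
    by (simp add: sum_divide_distrib[symmetric] sum_distrib_left[symmetric] sum_distrib_right[symmetric])
  finally show ?thesis .
qed

lemma affine_weights_sum_power2_dist:
  fixes S :: "'a::real_inner set"
  assumes "sum U S = 0" and "(\<Sum>v\<in>S. U v *\<^sub>R v) = 0"
  shows "(\<Sum>v\<in>S. \<Sum>w\<in>S. U v * U w * (norm (v - w))\<^sup>2) = 0"
proof -
  have e: "(norm (v - w))\<^sup>2 = v \<bullet> v + w \<bullet> w - 2 * (v \<bullet> w)" for v w :: 'a
    by (simp add: power2_norm_eq_inner algebra_simps inner_commute)
  have s1: "(\<Sum>v\<in>S. \<Sum>w\<in>S. U v * U w * (v \<bullet> v)) = 0"
    by (simp add: sum_distrib_left[symmetric] sum_distrib_right[symmetric] assms(1) mult.commute mult.left_commute)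
  have s2: "(\<Sum>v\<in>S. \<Sum>w\<in>S. U v * U w * (w \<bullet> w)) = 0"
    by (simp add: sum_distrib_left[symmetric] sum_distrib_right[symmetric] assms(1) mult.assoc)
  have s3: "(\<Sum>v\<in>S. \<Sum>w\<in>S. U v * U w * (v \<bullet> w)) = (\<Sum>v\<in>S. U v *\<^sub>R v) \<bullet> (\<Sum>w\<in>S. U w *\<^sub>R w)"
    by (simp add: inner_sum_left inner_sum_right sum_distrib_left mult.assoc, subst sum.swap, simp add: mult.left_commute)
  have "(\<Sum>v\<in>S. \<Sum>w\<in>S. U v * U w * (norm (v - w))\<^sup>2)
     = (\<Sum>v\<in>S. \<Sum>w\<in>S. U v * U w * (v \<bullet> v)) + (\<Sum>v\<in>S. \<Sum>w\<in>S. U v * U w * (w \<bullet> w))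
       - 2 * (\<Sum>v\<in>S. \<Sum>w\<in>S. U v * U w * (v \<bullet> w))"
    by (simp add: e algebra_simps sum.distrib sum_subtractf sum_distrib_left)
  then show ?thesis using s1 s2 s3 assms(2) by simp
qed

lemma affine_dependent_power2_dist_spread:
  fixes S :: "'a::real_inner set"
  assumes "finite S" and "affine_dependent S"
    and lo: "\<And>v w. v \<in> S \<Longrightarrow> w \<in> S \<Longrightarrow> v \<noteq> w \<Longrightarrow> m \<le> (norm (v - w))\<^sup>2"
    and hi: "\<And>v w. v \<in> S \<Longrightarrow> w \<in> S \<Longrightarrow> (norm (v - w))\<^sup>2 \<le> D"
  shows "D \<le> real (card S) * (D - m)"
proof -
  obtain U where U: "sum U S = 0" "\<exists>v\<in>S. U v \<noteq> 0" "(\<Sum>v\<in>S. U v *\<^sub>R v) = 0"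
    using \<open>affine_dependent S\<close> affine_dependent_explicit_finite[OF \<open>finite S\<close>] by blast
  obtain v where "v \<in> S" "v \<in> affine hull (S - {v})"
    using \<open>affine_dependent S\<close> unfolding affine_dependent_def by blast
  then obtain w where vw: "v \<in> S" "w \<in> S" "v \<noteq> w"
    by (metis affine_hull_empty Diff_iff empty_iff insertI1 subsetI subset_empty)
  have "m \<le> D" using lo[OF vw] hi[OF vw(1,2)] by linarith
  \<comment> \<open>The double sum of \<open>U v * U w * (D - \<parallel>v - w\<parallel>\<^sup>2)\<close> vanishes; its diagonal part is
    \<open>D * \<Sum> U\<^sup>2\<close>, and the off-diagonal terms are bounded below via
    \<open>\<bar>U v * U w\<bar> \<le> (U v\<^sup>2 + U w\<^sup>2) / 2\<close>.\<close>
  have pair_bound: "(if v = w then D * (U v)\<^sup>2 else 0) - (D - m) * (((U v)\<^sup>2 + (U w)\<^sup>2) / 2)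
      \<le> U v * U w * (D - (norm (v - w))\<^sup>2)" if "v \<in> S" "w \<in> S" for v w
  proof (cases "v = w")
    case True
    then show ?thesis using \<open>m \<le> D\<close> by (simp add: power2_eq_square)
  next
    case False
    have "\<bar>D - (norm (v - w))\<^sup>2\<bar> \<le> D - m" using lo[OF that False] hi[OF that] by linarith
    moreover have "\<bar>U v * U w\<bar> \<le> ((U v)\<^sup>2 + (U w)\<^sup>2) / 2"
      using sum_squares_bound[of "\<bar>U v\<bar>" "\<bar>U w\<bar>"] by (simp add: abs_mult power2_eq_square)
    ultimately have "\<bar>U v * U w * (D - (norm (v - w))\<^sup>2)\<bar> \<le> (((U v)\<^sup>2 + (U w)\<^sup>2) / 2) * (D - m)"
      unfolding abs_mult[of "U v * U w"] by (intro mult_mono) auto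
    then show ?thesis using False by (simp add: mult.commute)
  qed
  have "D * (\<Sum>v\<in>S. (U v)\<^sup>2) - (D - m) * (real (card S) * (\<Sum>v\<in>S. (U v)\<^sup>2))
      = D * (\<Sum>v\<in>S. (U v)\<^sup>2) - (D - m) * (\<Sum>v\<in>S. \<Sum>w\<in>S. ((U v)\<^sup>2 + (U w)\<^sup>2) / 2)"
    by (simp add: sum_sum_mean_power2[OF \<open>finite S\<close>])
  also have "\<dots> = (\<Sum>v\<in>S. \<Sum>w\<in>S. (if v = w then D * (U v)\<^sup>2 else 0) - (D - m) * (((U v)\<^sup>2 + (U w)\<^sup>2) / 2))"
    using \<open>finite S\<close> by (simp add: sum_subtractf sum_distrib_left)
  also have "\<dots> \<le> (\<Sum>v\<in>S. \<Sum>w\<in>S. U v * U w * (D - (norm (v - w))\<^sup>2))"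
    by (intro sum_mono pair_bound)
  also have "\<dots> = D * (sum U S)\<^sup>2 - (\<Sum>v\<in>S. \<Sum>w\<in>S. U v * U w * (norm (v - w))\<^sup>2)"
    by (simp add: right_diff_distrib sum_subtractf power2_eq_square sum_distrib_left sum_distrib_right
        mult.commute mult.left_commute)
  also have "\<dots> = 0"
    using affine_weights_sum_power2_dist[OF U(1,3)] U(1) by simp
  finally have "D * (\<Sum>v\<in>S. (U v)\<^sup>2) \<le> (real (card S) * (D - m)) * (\<Sum>v\<in>S. (U v)\<^sup>2)"
    by (simp add: algebra_simps)
  moreover have "(\<Sum>v\<in>S. (U v)\<^sup>2) > 0"
    using U(2) \<open>finite S\<close> by (auto intro: sum_pos2)
  ultimately show ?thesis by simp
qed

lemma card_gt_dim_power2_dist_spread: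
  fixes y :: "'i::finite \<Rightarrow> 'a::euclidean_space"
  assumes card: "CARD('i) \<ge> DIM('a) + 2"
    and lo: "\<And>i j. i \<noteq> j \<Longrightarrow> m \<le> (norm (y i - y j))\<^sup>2"
    and hi: "\<And>i j. (norm (y i - y j))\<^sup>2 \<le> D"
  shows "D \<le> real CARD('i) * (D - m)"
proof (cases "m \<le> 0")
  case True
  moreover have "D \<ge> 0" using hi[of undefined undefined] by simp
  moreover have "real CARD('i) \<ge> 1" by simp
  ultimately have "D - m \<le> real CARD('i) * (D - m)"
    using mult_right_mono[of 1 "real CARD('i)" "D - m"] by simp
  with \<open>m \<le> 0\<close> show ?thesis by linarith
next
  case False
  then have "inj y" using lo by (intro injI) force
  then have card_range: "card (range y) = CARD('i)" by (simp add: card_image)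
  have "affine_dependent (range y)"
    using card by (intro affine_dependent_biggerset) (simp_all add: card_range)
  have "D \<le> real (card (range y)) * (D - m)"
    by (rule affine_dependent_power2_dist_spread[OF _ \<open>affine_dependent (range y)\<close>]) (auto intro: lo hi)
  then show ?thesis by (simp add: card_range)
qed

definition sq_dist :: "(real^'s)^'i::finite \<Rightarrow> 'i \<Rightarrow> 'i \<Rightarrow> real" where
  "sq_dist Y i j = (norm (Y $ i - Y $ j))\<^sup>2"

definition offdiag_min :: "('i::finite \<Rightarrow> 'i \<Rightarrow> real) \<Rightarrow> real" where
  "offdiag_min f = Min ((\<lambda>(i, j). f i j) ` {(i, j). i \<noteq> j})"

definition partition_fn :: "(real \<Rightarrow> real) \<Rightarrow> (real^'s)^'i::finite \<Rightarrow> real" where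
  "partition_fn \<beta> Y = (\<Sum>k\<in>UNIV. \<Sum>l\<in>UNIV - {k}. \<beta> (sq_dist Y k l))"

text \<open>Up to the additive constant \<open>\<Sum> p\<^sub>i\<^sub>j log p\<^sub>i\<^sub>j\<close>, \<open>energy \<beta> p Y\<close> is the relative
  entropy \<open>\<C>(Y)\<close>.\<close>

definition energy ::
    "(real \<Rightarrow> real) \<Rightarrow> ('i::finite \<Rightarrow> 'i \<Rightarrow> real) \<Rightarrow> (real^'s)^'i \<Rightarrow> real" where
  "energy \<beta> p Y = ln (partition_fn \<beta> Y)
     - (\<Sum>i\<in>UNIV. \<Sum>j\<in>UNIV - {i}. p i j * ln (\<beta> (sq_dist Y i j)))"

definition total_sq_dist :: "(real^'s)^'i::finite \<Rightarrow> real" where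
  "total_sq_dist Y = (\<Sum>i\<in>UNIV. \<Sum>j\<in>UNIV - {i}. sq_dist Y i j)"

definition flow_weight ::
    "(real \<Rightarrow> real) \<Rightarrow> ('i::finite \<Rightarrow> 'i \<Rightarrow> real) \<Rightarrow> (real^'s)^'i \<Rightarrow> 'i \<Rightarrow> 'i \<Rightarrow> real" where "flow_weight \<beta> p Y i j = (p i j - qij \<beta> Y i j) * deriv (\<lambda>x. ln (\<beta> x)) (sq_dist Y i j)"

lemma sq_dist_nonneg: "sq_dist Y i j \<ge> 0"
  by (simp add: sq_dist_def)

lemma sq_dist_commute: "sq_dist Y i j = sq_dist Y j i"
  by (simp add: sq_dist_def norm_minus_commute)

lemma qij_eq: "qij \<beta> Y i j = \<beta> (sq_dist Y i j) / partition_fn \<beta> Y"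
  by (simp add: qij_def partition_fn_def sq_dist_def)

lemma flow_field_nth:
  "flow_field \<beta> p Y $ i = 4 *\<^sub>R (\<Sum>j\<in>UNIV - {i}. flow_weight \<beta> p Y i j *\<^sub>R (Y $ i - Y $ j))"
  by (simp add: flow_field_def flow_weight_def sq_dist_def)

lemma flow_weight_commute:
  assumes "\<And>i j. i \<noteq> j \<Longrightarrow> p i j = p j i"
  shows "flow_weight \<beta> p Y i j = flow_weight \<beta> p Y j i"
  using assms by (cases "i = j") (simp_all add: flow_weight_def qij_eq sq_dist_commute)

lemma offdiag_min_le: "i \<noteq> j \<Longrightarrow> offdiag_min f \<le> f i j"
  unfolding offdiag_min_def by (rule Min_le) auto

lemma offdiag_min_attained:
  fixes f :: "'i::finite \<Rightarrow> 'i \<Rightarrow> real"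
  assumes "CARD('i) \<ge> 2"
  obtains k l where "k \<noteq> l" "offdiag_min f = f k l"
proof -
  obtain a b :: 'i where "a \<noteq> b"
    using assms card_le_Suc0_iff_eq[of "UNIV :: 'i set"] by force
  then have "(\<lambda>(i, j). f i j) ` {(i, j). i \<noteq> j} \<noteq> {}" by auto
  from Min_in[OF _ this] show ?thesis
    using that unfolding offdiag_min_def by auto
qed

lemma offdiag_min_nonneg:
  fixes f :: "'i::finite \<Rightarrow> 'i \<Rightarrow> real"
  assumes "CARD('i) \<ge> 2" and "\<And>i j. i \<noteq> j \<Longrightarrow> f i j \<ge> 0"
  shows "offdiag_min f \<ge> 0"
  using offdiag_min_attained[OF assms(1), of f] assms(2) by metis

lemma admissible_p_card_ge_2:
  assumes "admissible_p (p :: 'i::finite \<Rightarrow> 'i \<Rightarrow> real)"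
  shows "CARD('i) \<ge> 2"
proof (rule ccontr)
  assume "\<not> CARD('i) \<ge> 2"
  then have "UNIV - {i} = {}" for i :: 'i
    using card_le_Suc0_iff_eq[of "UNIV :: 'i set"] by auto
  with assms show False by (simp add: admissible_p_def)
qed

lemma admissible_p_offdiag_min_pos:
  assumes "admissible_p p"
  shows "offdiag_min p > 0"
proof -
  obtain k l where "k \<noteq> l" "offdiag_min p = p k l"
    using offdiag_min_attained[OF admissible_p_card_ge_2[OF assms]] .
  with assms show ?thesis by (simp add: admissible_p_def)
qed

lemma config_diam_attained: obtains a b where "config_diam Y = dist (Y $ a) (Y $ b)"
proof -
  have "{dist (Y $ i) (Y $ j) |i j. True} = (\<lambda>(i, j). dist (Y $ i) (Y $ j)) ` UNIV" by auto
  then have "config_diam Y \<in> {dist (Y $ i) (Y $ j) |i j. True}"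
    unfolding config_diam_def by (intro Max_in) auto
  with that show ?thesis by blast
qed

lemma config_diam_nonneg: "config_diam Y \<ge> 0"
  by (rule config_diam_attained[of Y]) simp

lemma sq_dist_le_config_diam: "sq_dist Y i j \<le> (config_diam Y)\<^sup>2"
proof -
  have "{dist (Y $ i) (Y $ j) |i j. True} = (\<lambda>(i, j). dist (Y $ i) (Y $ j)) ` UNIV" by auto
  then have "dist (Y $ i) (Y $ j) \<le> config_diam Y"
    unfolding config_diam_def by (intro Max_ge) auto
  then show ?thesis
    unfolding sq_dist_def dist_norm[symmetric] by (intro power_mono) auto
qed

lemma total_sq_dist_nonneg: "total_sq_dist Y \<ge> 0"
  unfolding total_sq_dist_def by (intro sum_nonneg sq_dist_nonneg)

lemma config_diam_power2_le_total_sq_dist: "(config_diam Y)\<^sup>2 \<le> total_sq_dist Y"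
proof -
  obtain a b where ab: "config_diam Y = dist (Y $ a) (Y $ b)"
    using config_diam_attained .
  have "sq_dist Y a b \<le> total_sq_dist Y" if "a \<noteq> b"
  proof -
    have "sq_dist Y a b \<le> (\<Sum>j\<in>UNIV - {a}. sq_dist Y a j)"
      using that by (intro member_le_sum sq_dist_nonneg) auto
    also have "\<dots> \<le> total_sq_dist Y" unfolding total_sq_dist_def
      by (intro member_le_sum[where f = "\<lambda>i. \<Sum>j\<in>UNIV - {i}. sq_dist Y i j"] sum_nonneg sq_dist_nonneg) auto
    finally show ?thesis .
  qed
  then show ?thesis
    using ab total_sq_dist_nonneg[of Y] by (cases "a = b") (simp_all add: sq_dist_def dist_norm)
qed

lemma total_sq_dist_le:
  "total_sq_dist (Y :: (real^'s)^'i::finite) \<le> (real CARD('i))\<^sup>2 * (config_diam Y)\<^sup>2"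
proof -
  have "total_sq_dist Y \<le> (\<Sum>i\<in>UNIV. \<Sum>j\<in>UNIV. sq_dist Y i j)"
    unfolding total_sq_dist_def by (intro sum_mono sum_mono2) (auto intro: sq_dist_nonneg)
  also have "\<dots> \<le> (\<Sum>i\<in>(UNIV :: 'i set). \<Sum>j\<in>(UNIV :: 'i set). (config_diam Y)\<^sup>2)"
    by (intro sum_mono sq_dist_le_config_diam)
  finally show ?thesis by (simp add: power2_eq_square)
qed

lemma kernel_le_partition_fn:
  assumes pos: "\<And>x. x \<ge> 0 \<Longrightarrow> \<beta> x > 0" and "k \<noteq> l"
  shows "\<beta> (sq_dist Y k l) \<le> partition_fn \<beta> Y"
proof -
  have nonneg: "0 \<le> \<beta> (sq_dist Y i j)" for i j
    using pos[OF sq_dist_nonneg] by (rule less_imp_le)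
  have "\<beta> (sq_dist Y k l) \<le> (\<Sum>j\<in>UNIV - {k}. \<beta> (sq_dist Y k j))"
    using \<open>k \<noteq> l\<close> nonneg by (intro member_le_sum) auto
  also have "\<dots> \<le> partition_fn \<beta> Y"
    unfolding partition_fn_def using nonneg
    by (intro member_le_sum[where f = "\<lambda>k. \<Sum>j\<in>UNIV - {k}. \<beta> (sq_dist Y k j)"] sum_nonneg) auto
  finally show ?thesis .
qed

lemma partition_fn_pos:
  fixes Y :: "(real^'s)^'i::finite"
  assumes pos: "\<And>x. x \<ge> 0 \<Longrightarrow> \<beta> x > 0" and "CARD('i) \<ge> 2"
  shows "partition_fn \<beta> Y > 0"
proof -
  obtain k l :: 'i where "k \<noteq> l"
    using offdiag_min_attained[OF \<open>CARD('i) \<ge> 2\<close>] .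
  then have "\<beta> (sq_dist Y k l) \<le> partition_fn \<beta> Y"
    by (rule kernel_le_partition_fn[rotated]) (rule pos)
  with pos[OF sq_dist_nonneg] show ?thesis by (rule less_le_trans)
qed

lemma sum_qij:
  assumes "partition_fn \<beta> Y > 0"
  shows "(\<Sum>i\<in>UNIV. \<Sum>j\<in>UNIV - {i}. qij \<beta> Y i j) = 1"
  using assms by (simp add: qij_eq sum_divide_distrib[symmetric] partition_fn_def[symmetric])

lemma energy_ge_spread:
  fixes p :: "'i::finite \<Rightarrow> 'i \<Rightarrow> real"
  assumes pos: "\<And>x. x \<ge> 0 \<Longrightarrow> \<beta> x > 0"
    and antimono: "\<And>x y. 0 \<le> x \<Longrightarrow> x \<le> y \<Longrightarrow> \<beta> y \<le> \<beta> x"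
    and adm: "admissible_p p"
  shows "offdiag_min p * (ln (\<beta> (offdiag_min (sq_dist Y))) - ln (\<beta> ((config_diam Y)\<^sup>2)))
    \<le> energy \<beta> p Y"
proof -
  define m where "m = offdiag_min (sq_dist Y)"
  define g where "g i j = ln (\<beta> m) - ln (\<beta> (sq_dist Y i j))" for i j
  obtain k l where kl: "k \<noteq> l" "m = sq_dist Y k l"
    unfolding m_def using offdiag_min_attained[OF admissible_p_card_ge_2[OF adm]] .
  have ln_mono: "ln (\<beta> y) \<le> ln (\<beta> x)" if "0 \<le> x" "x \<le> y" for x y
    using antimono[OF that] pos that by simp
  have "m \<ge> 0" using kl(2) sq_dist_nonneg by simp
  have g_nonneg: "p i j * g i j \<ge> 0" if "i \<noteq> j" for i j
  proof (rule mult_nonneg_nonneg)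
    show "p i j \<ge> 0" using adm that by (simp add: admissible_p_def less_imp_le)
    show "g i j \<ge> 0"
      using ln_mono[OF \<open>m \<ge> 0\<close> offdiag_min_le[OF that, of "sq_dist Y", folded m_def]]
      unfolding g_def by simp
  qed
  have "ln (\<beta> m) \<le> ln (partition_fn \<beta> Y)"
    using kernel_le_partition_fn[OF _ kl(1), of \<beta> Y] pos[OF \<open>m \<ge> 0\<close>] kl(2) pos by simp
  then have "(\<Sum>i\<in>UNIV. \<Sum>j\<in>UNIV - {i}. p i j * g i j) \<le> energy \<beta> p Y"
    using adm unfolding energy_def g_def admissible_p_def
    by (simp add: right_diff_distrib sum_subtractf sum_distrib_right[symmetric])
  moreover obtain a b where "config_diam Y = dist (Y $ a) (Y $ b)"
    using config_diam_attained .
  then have diam: "(config_diam Y)\<^sup>2 = sq_dist Y a b"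
    by (simp add: sq_dist_def dist_norm)
  have "offdiag_min p * g a b \<le> (\<Sum>i\<in>UNIV. \<Sum>j\<in>UNIV - {i}. p i j * g i j)"
  proof (cases "a = b")
    case True
    then have "g a b \<le> 0"
      using ln_mono[OF order_refl \<open>m \<ge> 0\<close>] unfolding g_def by (simp add: sq_dist_def)
    then have "offdiag_min p * g a b \<le> 0"
      using admissible_p_offdiag_min_pos[OF adm] by (simp add: mult_le_0_iff)
    also have "0 \<le> (\<Sum>i\<in>UNIV. \<Sum>j\<in>UNIV - {i}. p i j * g i j)"
      using g_nonneg by (intro sum_nonneg) auto
    finally show ?thesis .
  next
    case False
    have "g a b \<ge> 0"
      using ln_mono[OF \<open>m \<ge> 0\<close> offdiag_min_le[OF False, of "sq_dist Y", folded m_def]]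
      unfolding g_def by simp
    then have "offdiag_min p * g a b \<le> p a b * g a b"
      using offdiag_min_le[OF False, of p] by (rule mult_right_mono[rotated])
    also have "\<dots> \<le> (\<Sum>j\<in>UNIV - {a}. p a j * g a j)"
      using False g_nonneg by (intro member_le_sum[where f = "\<lambda>j. p a j * g a j"]) auto
    also have "\<dots> \<le> (\<Sum>i\<in>UNIV. \<Sum>j\<in>UNIV - {i}. p i j * g i j)"
      using g_nonneg
      by (intro member_le_sum[where f = "\<lambda>i. \<Sum>j\<in>UNIV - {i}. p i j * g i j"] sum_nonneg) auto
    finally show ?thesis .
  qed
  ultimately show ?thesis unfolding g_def m_def diam by linarith
qed

lemma sum_offdiag_inner_flow_field:
  fixes y :: "(real^'s)^'i::finite"
  assumes c_commute: "\<And>i j. i \<noteq> j \<Longrightarrow> c i j = c j i"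
  shows "(\<Sum>i\<in>UNIV. \<Sum>j\<in>UNIV - {i}. c i j * (2 * ((y $ i - y $ j) \<bullet> (flow_field \<beta> p y $ i - flow_field \<beta> p y $ j))))
    = 16 * (\<Sum>i\<in>UNIV. (\<Sum>j\<in>UNIV - {i}. c i j *\<^sub>R (y $ i - y $ j))
                     \<bullet> (\<Sum>j\<in>UNIV - {i}. flow_weight \<beta> p y i j *\<^sub>R (y $ i - y $ j)))"
proof -
  have "(\<Sum>i\<in>UNIV. \<Sum>j\<in>UNIV - {i}. c i j * (2 * ((y $ i - y $ j) \<bullet> (flow_field \<beta> p y $ i - flow_field \<beta> p y $ j))))
      = 2 * (\<Sum>i\<in>UNIV. \<Sum>j\<in>UNIV - {i}. c i j * ((y $ i - y $ j) \<bullet> (flow_field \<beta> p y $ i - flow_field \<beta> p y $ j)))"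
    by (simp add: sum_distrib_left mult.left_commute)
  also have "\<dots> = 4 * (\<Sum>i\<in>UNIV. flow_field \<beta> p y $ i \<bullet> (\<Sum>j\<in>UNIV - {i}. c i j *\<^sub>R (y $ i - y $ j)))"
    using sum_offdiag_symmetric_inner_diff[where y = "\<lambda>i. y $ i" and z = "\<lambda>i. flow_field \<beta> p y $ i",
        OF c_commute]
    by simp
  finally show ?thesis
    by (simp add: flow_field_nth sum_distrib_left inner_commute)
qed

lemma sum_flow_weight_dissipation:
  fixes y :: "(real^'s)^'i::finite"
  assumes p_commute: "\<And>i j. i \<noteq> j \<Longrightarrow> p i j = p j i"
  shows "(\<Sum>i\<in>UNIV. \<Sum>j\<in>UNIV - {i}. flow_weight \<beta> p y i j
            * (2 * ((y $ i - y $ j) \<bullet> (flow_field \<beta> p y $ i - flow_field \<beta> p y $ j))))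
    = (\<Sum>i\<in>UNIV. (norm (flow_field \<beta> p y $ i))\<^sup>2)"
proof -
  have "(\<Sum>i\<in>UNIV. \<Sum>j\<in>UNIV - {i}. flow_weight \<beta> p y i j
            * (2 * ((y $ i - y $ j) \<bullet> (flow_field \<beta> p y $ i - flow_field \<beta> p y $ j))))
      = 16 * (\<Sum>i\<in>UNIV. (\<Sum>j\<in>UNIV - {i}. flow_weight \<beta> p y i j *\<^sub>R (y $ i - y $ j))
                       \<bullet> (\<Sum>j\<in>UNIV - {i}. flow_weight \<beta> p y i j *\<^sub>R (y $ i - y $ j)))"
    by (rule sum_offdiag_inner_flow_field) (rule flow_weight_commute[OF p_commute])
  then show ?thesis
    by (simp add: flow_field_nth power2_norm_eq_inner sum_distrib_left)
qed

locale kernel_flow =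
  fixes \<beta> \<beta>' :: "real \<Rightarrow> real" and p :: "'i::finite \<Rightarrow> 'i \<Rightarrow> real"
    and Y :: "real \<Rightarrow> (real^'s)^'i"
  assumes kernel_pos: "\<And>x. x \<ge> 0 \<Longrightarrow> \<beta> x > 0"
    and kernel_deriv: "\<And>x. x \<ge> 0 \<Longrightarrow> (\<beta> has_real_derivative \<beta>' x) (at x)"
    and admissible: "admissible_p p"
    and flow: "is_flow \<beta> p Y"
begin

lemma p_commute: "i \<noteq> j \<Longrightarrow> p i j = p j i"
  using admissible by (simp add: admissible_p_def)

lemma p_pos: "i \<noteq> j \<Longrightarrow> p i j > 0"
  using admissible by (simp add: admissible_p_def)

lemma sum_p: "(\<Sum>i\<in>UNIV. \<Sum>j\<in>UNIV - {i}. p i j) = 1"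
  using admissible by (simp add: admissible_p_def)

lemma card_ge_2: "CARD('i) \<ge> 2"
  by (rule admissible_p_card_ge_2[OF admissible])

lemma kernel_partition_fn_pos: "partition_fn \<beta> (y :: (real^'s)^'i) > 0"
  by (rule partition_fn_pos[OF kernel_pos card_ge_2])

lemma offdiag_min_sq_dist_nonneg: "offdiag_min (sq_dist (y :: (real^'s)^'i)) \<ge> 0"
  by (rule offdiag_min_nonneg[OF card_ge_2 sq_dist_nonneg])

lemma deriv_ln_kernel:
  assumes "x \<ge> 0"
  shows "deriv (\<lambda>x. ln (\<beta> x)) x = \<beta>' x / \<beta> x"
proof (rule DERIV_imp_deriv)
  show "((\<lambda>x. ln (\<beta> x)) has_real_derivative \<beta>' x / \<beta> x) (at x)"
    using DERIV_chain2[OF DERIV_ln[OF kernel_pos[OF assms]] kernel_deriv[OF assms]]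
    by (simp add: divide_inverse mult.commute)
qed

lemma flow_weight_eq:
  "flow_weight \<beta> p y i j = (p i j - qij \<beta> y i j) * (\<beta>' (sq_dist y i j) / \<beta> (sq_dist y i j))"
  by (simp add: flow_weight_def deriv_ln_kernel sq_dist_nonneg)

lemma sq_dist_has_derivative:
  assumes "t \<ge> 0"
  shows "((\<lambda>t. sq_dist (Y t) i j) has_real_derivative
      2 * ((Y t $ i - Y t $ j) \<bullet> (flow_field \<beta> p (Y t) $ i - flow_field \<beta> p (Y t) $ j)))
    (at t within {0..})"
proof -
  have "(Y has_vector_derivative flow_field \<beta> p (Y t)) (at t within {0..})"
    using flow assms by (simp add: is_flow_def)
  note nth = bounded_linear.has_vector_derivative[OF bounded_linear_vec_nth this]
  show ?thesis
    unfolding sq_dist_def by (rule has_real_derivative_power2_norm_diff[OF nth nth])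
qed

lemma energy_has_derivative:
  assumes "t \<ge> 0"
  shows "((\<lambda>t. energy \<beta> p (Y t)) has_real_derivative
      - (\<Sum>i\<in>UNIV. (norm (flow_field \<beta> p (Y t) $ i))\<^sup>2)) (at t within {0..})"
proof -
  define y where "y = Y t"
  define F where "F = flow_field \<beta> p y"
  define D where "D i j = 2 * ((y $ i - y $ j) \<bullet> (F $ i - F $ j))" for i j
  define Z where "Z = partition_fn \<beta> y"
  define d where "d = sq_dist y"
  have d_nonneg: "d i j \<ge> 0" for i j unfolding d_def by (rule sq_dist_nonneg)
  have "Z > 0" unfolding Z_def by (rule kernel_partition_fn_pos)
  have sq_dist': "((\<lambda>t. sq_dist (Y t) i j) has_real_derivative D i j) (at t within {0..})" for i j
    using sq_dist_has_derivative[OF assms] unfolding D_def F_def y_def .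
  have kernel': "((\<lambda>t. \<beta> (sq_dist (Y t) i j)) has_real_derivative \<beta>' (d i j) * D i j) (at t within {0..})" for i j
    unfolding d_def y_def by (rule DERIV_chain2[OF kernel_deriv[OF sq_dist_nonneg] sq_dist'])
  have ln_kernel': "((\<lambda>t. ln (\<beta> (sq_dist (Y t) i j))) has_real_derivative
      \<beta>' (d i j) / \<beta> (d i j) * D i j) (at t within {0..})" for i j
    using DERIV_chain2[OF DERIV_ln[OF kernel_pos[OF sq_dist_nonneg]] kernel'[unfolded d_def y_def]]
    unfolding d_def y_def by (simp add: divide_inverse mult.commute mult.left_commute)
  have "((\<lambda>t. energy \<beta> p (Y t)) has_real_derivative
      inverse Z * (\<Sum>i\<in>UNIV. \<Sum>j\<in>UNIV - {i}. \<beta>' (d i j) * D i j)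
      - (\<Sum>i\<in>UNIV. \<Sum>j\<in>UNIV - {i}. p i j * (\<beta>' (d i j) / \<beta> (d i j) * D i j))) (at t within {0..})"
    using \<open>Z > 0\<close> unfolding energy_def Z_def partition_fn_def y_def
    by (intro DERIV_diff DERIV_sum DERIV_cmult DERIV_chain2[OF DERIV_ln] kernel' ln_kernel')
  moreover have "inverse Z * (\<Sum>i\<in>UNIV. \<Sum>j\<in>UNIV - {i}. \<beta>' (d i j) * D i j)
      - (\<Sum>i\<in>UNIV. \<Sum>j\<in>UNIV - {i}. p i j * (\<beta>' (d i j) / \<beta> (d i j) * D i j))
      = - (\<Sum>i\<in>UNIV. \<Sum>j\<in>UNIV - {i}. flow_weight \<beta> p y i j * D i j)"
  proof -
    have "flow_weight \<beta> p y i j * D i j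
        = p i j * (\<beta>' (d i j) / \<beta> (d i j) * D i j) - inverse Z * (\<beta>' (d i j) * D i j)" for i j
      using kernel_pos[OF d_nonneg[of i j]]
      by (simp add: flow_weight_eq qij_eq Z_def[symmetric] d_def[symmetric] field_simps)
    then show ?thesis by (simp add: sum_subtractf sum_distrib_left)
  qed
  moreover have "(\<Sum>i\<in>UNIV. \<Sum>j\<in>UNIV - {i}. flow_weight \<beta> p y i j * D i j)
      = (\<Sum>i\<in>UNIV. (norm (F $ i))\<^sup>2)"
    unfolding D_def F_def by (rule sum_flow_weight_dissipation[OF p_commute])
  ultimately show ?thesis unfolding F_def y_def by simp
qed

lemma energy_le_initial:
  assumes "t \<ge> 0"
  shows "energy \<beta> p (Y t) \<le> energy \<beta> p (Y 0)"
proof -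
  have "energy \<beta> p (Y t) \<le> energy \<beta> p (Y 0) + 0 * t"
    by (rule le_linear_growth_if_deriv_le[OF energy_has_derivative _ assms]) (auto intro!: sum_nonneg)
  then show ?thesis by simp
qed

lemma total_sq_dist_has_derivative:
  assumes "t \<ge> 0"
  shows "((\<lambda>t. total_sq_dist (Y t)) has_real_derivative
      8 * real CARD('i) * (\<Sum>i\<in>UNIV. \<Sum>j\<in>UNIV - {i}. flow_weight \<beta> p (Y t) i j * sq_dist (Y t) i j))
    (at t within {0..})"
proof -
  define y where "y = Y t"
  define u where "u = flow_weight \<beta> p y"
  define W where "W i = (\<Sum>j\<in>UNIV - {i}. 1 *\<^sub>R (y $ i - y $ j))" for i
  have W_diff: "W i - W j = real CARD('i) *\<^sub>R (y $ i - y $ j)" for i j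
  proof -
    have "W i = (\<Sum>k\<in>UNIV. y $ i - y $ k)" for i
      unfolding W_def by (simp add: sum_diff1)
    then have "W i = real CARD('i) *\<^sub>R y $ i - (\<Sum>k\<in>UNIV. y $ k)" for i
      by (simp add: sum_subtractf sum_constant_scaleR del: sum_constant)
    then show ?thesis by (simp add: scaleR_diff_right)
  qed
  have "(\<Sum>i\<in>UNIV. \<Sum>j\<in>UNIV - {i}. 2 * ((y $ i - y $ j) \<bullet> (flow_field \<beta> p y $ i - flow_field \<beta> p y $ j)))
      = 16 * (\<Sum>i\<in>UNIV. W i \<bullet> (\<Sum>j\<in>UNIV - {i}. u i j *\<^sub>R (y $ i - y $ j)))"
    using sum_offdiag_inner_flow_field[where c = "\<lambda>_ _. 1" and y = y and \<beta> = \<beta> and p = p]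
    unfolding W_def u_def by simp
  also have "\<dots> = 8 * (\<Sum>i\<in>UNIV. \<Sum>j\<in>UNIV - {i}. u i j * ((y $ i - y $ j) \<bullet> (W i - W j)))"
    using sum_offdiag_symmetric_inner_diff[of u "\<lambda>i. y $ i" W]
    unfolding u_def by (simp add: flow_weight_commute p_commute)
  also have "\<dots> = 8 * real CARD('i) * (\<Sum>i\<in>UNIV. \<Sum>j\<in>UNIV - {i}. u i j * sq_dist y i j)"
    by (simp add: W_diff sq_dist_def power2_norm_eq_inner sum_distrib_left mult_ac)
  finally show ?thesis
    unfolding total_sq_dist_def u_def y_def
    by (rule DERIV_cong[OF DERIV_sum[OF DERIV_sum[OF sq_dist_has_derivative[OF assms]]]])
qed

end

lemma gaussian_flow_diam_bounded:
  fixes p :: "'i::finite \<Rightarrow> 'i \<Rightarrow> real" and Y :: "real \<Rightarrow> (real^'s)^'i"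
  assumes card: "CARD('i) > CARD('s) + 1" and adm: "admissible_p p"
    and flow: "is_flow (\<lambda>x. exp (- x)) p Y"
  shows "\<exists>C. \<forall>t\<ge>0. config_diam (Y t) \<le> C"
proof -
  interpret kernel_flow "\<lambda>x. exp (- x)" "\<lambda>x. - exp (- x)" p Y
    by unfold_locales (auto intro!: derivative_eq_intros simp: adm flow)
  define P where "P = offdiag_min p"
  define K where "K = energy (\<lambda>x. exp (- x)) p (Y 0)"
  define n where "n = real CARD('i)"
  have "P > 0" unfolding P_def using admissible_p_offdiag_min_pos[OF adm] .
  have "config_diam (Y t) \<le> sqrt (n * K / P)" if "t \<ge> 0" for t
  proof -
    define D where "D = (config_diam (Y t))\<^sup>2"
    define m where "m = offdiag_min (sq_dist (Y t))"
    have "P * (D - m) \<le> energy (\<lambda>x. exp (- x)) p (Y t)"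
      using energy_ge_spread[OF _ _ adm, of "\<lambda>x. exp (- x)" "Y t"]
      unfolding P_def D_def m_def by simp
    also have "\<dots> \<le> K"
      unfolding K_def using energy_le_initial[OF that] .
    finally have spread_le_energy: "P * (D - m) \<le> K" .
    have "D \<le> n * (D - m)"
      unfolding n_def
    proof (rule card_gt_dim_power2_dist_spread[where y = "\<lambda>i. Y t $ i"])
      show "CARD('i) \<ge> DIM(real^'s) + 2" using card by simp
      show "m \<le> (norm (Y t $ i - Y t $ j))\<^sup>2" if "i \<noteq> j" for i j
        using offdiag_min_le[OF that] unfolding m_def sq_dist_def .
      show "(norm (Y t $ i - Y t $ j))\<^sup>2 \<le> D" for i j
        using sq_dist_le_config_diam unfolding D_def sq_dist_def .
    qed
    then have "P * D \<le> n * (P * (D - m))"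
      using mult_left_mono[of D "n * (D - m)" P] \<open>P > 0\<close> by (simp add: mult.left_commute)
    also have "\<dots> \<le> n * K"
      using spread_le_energy by (intro mult_left_mono) (simp_all add: n_def)
    finally have "P * D \<le> n * K" .
    then have "D \<le> n * K / P"
      using \<open>P > 0\<close> by (simp add: field_simps)
    then show ?thesis unfolding D_def by (rule real_le_rsqrt)
  qed
  then show ?thesis by blast
qed

locale cauchy_flow =
  fixes p :: "'i::finite \<Rightarrow> 'i \<Rightarrow> real" and Y :: "real \<Rightarrow> (real^'s)^'i"
  assumes p_admissible: "admissible_p p"
    and is_cauchy_flow: "is_flow (\<lambda>x. 1 / (1 + x)) p Y"

sublocale cauchy_flow \<subseteq> kernel_flow "\<lambda>x. 1 / (1 + x)" "\<lambda>x. - 1 / (1 + x)\<^sup>2" p Y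
proof
  show "((\<lambda>x. 1 / (1 + x)) has_real_derivative - 1 / (1 + x)\<^sup>2) (at x)" if "x \<ge> 0" for x :: real
    using that by (auto intro!: derivative_eq_intros simp: power2_eq_square)
qed (simp_all add: p_admissible is_cauchy_flow)

context cauchy_flow
begin

lemma cauchy_flow_weight_eq:
  "flow_weight (\<lambda>x. 1 / (1 + x)) p y i j
    = (qij (\<lambda>x. 1 / (1 + x)) y i j - p i j) / (1 + sq_dist y i j)"
proof -
  have "1 + sq_dist y i j > 0" using sq_dist_nonneg[of y i j] by linarith
  then have ratio: "- 1 / (1 + sq_dist y i j)\<^sup>2 / (1 / (1 + sq_dist y i j)) = - 1 / (1 + sq_dist y i j)"
    by (simp add: power2_eq_square)
  have "(a - b) * (- 1 / c) = (b - a) / c" for a b c :: real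
    by (simp add: divide_simps)
  then show ?thesis
    unfolding flow_weight_eq ratio .
qed

lemma cauchy_weighted_sq_dist_sum_le:
  fixes y :: "(real^'s)^'i"
  shows "(\<Sum>i\<in>UNIV. \<Sum>j\<in>UNIV - {i}. flow_weight (\<lambda>x. 1 / (1 + x)) p y i j * sq_dist y i j)
    \<le> 1 / (1 + offdiag_min (sq_dist y))"
proof -
  define q where "q = qij (\<lambda>x. 1 / (1 + x)) y"
  define m where "m = offdiag_min (sq_dist y)"
  have sum_q: "(\<Sum>i\<in>UNIV. \<Sum>j\<in>UNIV - {i}. q i j) = 1"
    unfolding q_def by (rule sum_qij[OF kernel_partition_fn_pos])
  have q_nonneg: "q i j \<ge> 0" for i j
    using kernel_partition_fn_pos[of y] sq_dist_nonneg[of y i j] unfolding q_def qij_eq by simp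
  have "m \<ge> 0" unfolding m_def by (rule offdiag_min_sq_dist_nonneg)
  \<comment> \<open>As \<open>\<Sum> q = \<Sum> p = 1\<close>, only the terms \<open>(p - q) / (1 + d)\<close> of
    \<open>(q - p) d / (1 + d)\<close> survive.\<close>
  have "flow_weight (\<lambda>x. 1 / (1 + x)) p y i j * sq_dist y i j \<le> q i j - p i j + p i j / (1 + m)"
    if "i \<noteq> j" for i j
  proof -
    have "p i j / (1 + sq_dist y i j) \<le> p i j / (1 + m)"
      using p_pos[OF that] \<open>m \<ge> 0\<close> offdiag_min_le[OF that, of "sq_dist y"]
      unfolding m_def by (intro divide_left_mono) auto
    moreover have "q i j / (1 + sq_dist y i j) \<ge> 0"
      using q_nonneg sq_dist_nonneg[of y i j] by simp
    moreover have "(b - a) / (1 + x) * x = b - a + a / (1 + x) - b / (1 + x)" if "x > -1" for a b x :: real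
      using that by (simp add: divide_simps) (simp add: algebra_simps)
    then have "flow_weight (\<lambda>x. 1 / (1 + x)) p y i j * sq_dist y i j
        = q i j - p i j + p i j / (1 + sq_dist y i j) - q i j / (1 + sq_dist y i j)"
      unfolding cauchy_flow_weight_eq q_def[symmetric] using sq_dist_nonneg[of y i j] by simp
    ultimately show ?thesis by linarith
  qed
  then have "(\<Sum>i\<in>UNIV. \<Sum>j\<in>UNIV - {i}. flow_weight (\<lambda>x. 1 / (1 + x)) p y i j * sq_dist y i j)
      \<le> (\<Sum>i\<in>UNIV. \<Sum>j\<in>UNIV - {i}. q i j - p i j + p i j / (1 + m))"
    by (intro sum_mono) auto
  also have "\<dots> = 1 / (1 + m)"
    by (simp add: sum.distrib sum_subtractf sum_divide_distrib[symmetric] sum_q sum_p)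
  finally show ?thesis unfolding m_def .
qed

lemma cauchy_spread_ratio_le:
  assumes "t \<ge> 0"
  shows "1 + (config_diam (Y t))\<^sup>2
    \<le> exp (energy (\<lambda>x. 1 / (1 + x)) p (Y 0) / offdiag_min p) * (1 + offdiag_min (sq_dist (Y t)))"
proof -
  define D where "D = (config_diam (Y t))\<^sup>2"
  define m where "m = offdiag_min (sq_dist (Y t))"
  define P where "P = offdiag_min p"
  define K where "K = energy (\<lambda>x. 1 / (1 + x)) p (Y 0)"
  have "P > 0" unfolding P_def by (rule admissible_p_offdiag_min_pos[OF admissible])
  have "D \<ge> 0" "m \<ge> 0"
    unfolding D_def m_def by (simp_all add: offdiag_min_sq_dist_nonneg)
  have "P * (ln (1 / (1 + m)) - ln (1 / (1 + D))) \<le> energy (\<lambda>x. 1 / (1 + x)) p (Y t)"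
    unfolding P_def m_def D_def
    by (rule energy_ge_spread[OF kernel_pos _ admissible]) (auto intro!: divide_left_mono mult_pos_pos)
  also have "\<dots> \<le> K"
    unfolding K_def by (rule energy_le_initial[OF assms])
  finally have "ln ((1 + D) / (1 + m)) \<le> K / P"
    using \<open>P > 0\<close> \<open>D \<ge> 0\<close> \<open>m \<ge> 0\<close> by (simp add: ln_div field_simps)
  then have "exp (ln ((1 + D) / (1 + m))) \<le> exp (K / P)"
    by (simp only: exp_le_cancel_iff)
  then have "(1 + D) / (1 + m) \<le> exp (K / P)"
    using \<open>D \<ge> 0\<close> \<open>m \<ge> 0\<close> by simp
  then show ?thesis
    using \<open>m \<ge> 0\<close> unfolding D_def m_def P_def K_def by (simp add: field_simps)
qed

lemma total_sq_dist_power2_growth: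
  "\<exists>c\<ge>0. \<forall>t\<ge>0. (total_sq_dist (Y t))\<^sup>2 \<le> (total_sq_dist (Y 0))\<^sup>2 + c * t"
proof -
  define n where "n = real CARD('i)"
  define R where "R = exp (energy (\<lambda>x. 1 / (1 + x)) p (Y 0) / offdiag_min p)"
  define I where "I t = total_sq_dist (Y t)" for t
  define I' where "I' t = 8 * n * (\<Sum>i\<in>UNIV. \<Sum>j\<in>UNIV - {i}.
      flow_weight (\<lambda>x. 1 / (1 + x)) p (Y t) i j * sq_dist (Y t) i j)" for t
  have "n > 0" "R > 0" unfolding n_def R_def by simp_all
  have I_deriv: "((\<lambda>t. (I t)\<^sup>2) has_real_derivative 2 * I t * I' t) (at t within {0..})" if "t \<ge> 0" for t
    using DERIV_mult[OF total_sq_dist_has_derivative[OF that] total_sq_dist_has_derivative[OF that]]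
    unfolding I_def I'_def n_def power2_eq_square by (simp add: algebra_simps)
  have I_deriv_bound: "2 * I t * I' t \<le> 16 * n ^ 3 * R" if "t \<ge> 0" for t
  proof -
    define D where "D = (config_diam (Y t))\<^sup>2"
    define m where "m = offdiag_min (sq_dist (Y t))"
    have "D \<ge> 0" "m \<ge> 0"
      unfolding D_def m_def by (simp_all add: offdiag_min_sq_dist_nonneg)
    have "I' t \<le> 8 * n * (1 / (1 + m))"
      unfolding I'_def m_def
      using mult_left_mono[OF cauchy_weighted_sq_dist_sum_le[of "Y t"], of "8 * n"] \<open>n > 0\<close> by simp
    also have "1 / (1 + m) \<le> R / (1 + D)"
    proof -
      have "1 + D \<le> R * (1 + m)"
        using cauchy_spread_ratio_le[OF that] unfolding D_def m_def R_def .
      then show ?thesis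
        using \<open>D \<ge> 0\<close> \<open>m \<ge> 0\<close> by (simp add: divide_simps mult.commute)
    qed
    finally have "I' t \<le> 8 * n * (R / (1 + D))"
      using \<open>n > 0\<close> by simp
    moreover have "0 \<le> I t" "I t \<le> n\<^sup>2 * D"
      unfolding I_def D_def n_def
      using total_sq_dist_nonneg total_sq_dist_le[of "Y t"] by simp_all
    ultimately have "2 * I t * I' t \<le> 2 * I t * (8 * n * (R / (1 + D)))"
      by (intro mult_left_mono) auto
    also have "\<dots> \<le> 2 * (n\<^sup>2 * D) * (8 * n * (R / (1 + D)))"
      using \<open>I t \<le> n\<^sup>2 * D\<close> \<open>n > 0\<close> \<open>R > 0\<close> \<open>D \<ge> 0\<close> by (intro mult_right_mono) auto
    \<comment> \<open>The decay \<open>1 / (1 + D)\<close> of the kernel compensates the size \<open>n\<^sup>2 D\<close> of the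
      total squared distance.\<close>
    also have "\<dots> = 16 * n ^ 3 * R * (D / (1 + D))"
      by (simp add: power2_eq_square power3_eq_cube)
    also have "\<dots> \<le> 16 * n ^ 3 * R * 1"
      using \<open>n > 0\<close> \<open>R > 0\<close> \<open>D \<ge> 0\<close> by (intro mult_left_mono) auto
    finally show ?thesis by simp
  qed
  have growth: "(I t)\<^sup>2 \<le> (I 0)\<^sup>2 + 16 * n ^ 3 * R * t" if "t \<ge> 0" for t
    by (rule le_linear_growth_if_deriv_le[OF I_deriv I_deriv_bound that])
  moreover have "16 * n ^ 3 * R \<ge> 0" using \<open>n > 0\<close> \<open>R > 0\<close> by simp
  ultimately show ?thesis unfolding I_def by blast
qed

lemma cauchy_flow_diam_growth: "\<exists>C. \<forall>t\<ge>1. config_diam (Y t) \<le> C * t powr (1/4)"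
proof -
  obtain c where "c \<ge> 0" and growth: "\<And>t. t \<ge> 0 \<Longrightarrow> (total_sq_dist (Y t))\<^sup>2 \<le> (total_sq_dist (Y 0))\<^sup>2 + c * t"
    using total_sq_dist_power2_growth by blast
  define A where "A = (total_sq_dist (Y 0))\<^sup>2 + c"
  have "config_diam (Y t) \<le> A powr (1/4) * t powr (1/4)" if "t \<ge> 1" for t
  proof (rule power4_le_imp_le_powr)
    have "(config_diam (Y t)) ^ 4 = ((config_diam (Y t))\<^sup>2)\<^sup>2" by simp
    also have "\<dots> \<le> (total_sq_dist (Y t))\<^sup>2"
      using config_diam_power2_le_total_sq_dist by (intro power_mono) auto
    also have "\<dots> \<le> (total_sq_dist (Y 0))\<^sup>2 + c * t"
      using growth \<open>t \<ge> 1\<close> by simp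
    also have "\<dots> \<le> A * t"
      using \<open>t \<ge> 1\<close> mult_left_mono[of 1 t "(total_sq_dist (Y 0))\<^sup>2"]
      unfolding A_def by (simp add: algebra_simps)
    finally show "(config_diam (Y t)) ^ 4 \<le> A * t" .
  qed (use \<open>c \<ge> 0\<close> \<open>t \<ge> 1\<close> config_diam_nonneg in \<open>simp_all add: A_def\<close>)
  then show ?thesis by blast
qed

end

theorem theorem1p1:
  fixes p :: "'i::finite \<Rightarrow> 'i \<Rightarrow> real"
    and Y1 Y2 :: "real \<Rightarrow> (real^'s)^'i"
    and Y0 :: "(real^'s)^'i"
  assumes "CARD('i) > CARD('s) + 1"
    and "admissible_p p"
    and "is_flow (\<lambda>x. 1 / (1 + x)) p Y1" and "Y1 0 = Y0"
    and "is_flow (\<lambda>x. exp (- x)) p Y2" and "Y2 0 = Y0"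
  shows "(\<exists>C. \<forall>t\<ge>1. config_diam (Y1 t) \<le> C * t powr (1/4))
       \<and> (\<exists>C. \<forall>t\<ge>0. config_diam (Y2 t) \<le> C)"
proof
  interpret cauchy_flow p Y1
    using assms(2,3) by unfold_locales
  show "\<exists>C. \<forall>t\<ge>1. config_diam (Y1 t) \<le> C * t powr (1/4)"
    by (rule cauchy_flow_diam_growth)
  show "\<exists>C. \<forall>t\<ge>0. config_diam (Y2 t) \<le> C"
    using gaussian_flow_diam_bounded[OF assms(1,2,5)] .
qed

end
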